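(* Let $p\in(1,\infty)$, $X\in\mathfrak A_p$, $\theta\in[0,p)$, $S\in\mathcal{LCR}_\theta(X)$ closed, and $\{\mathfrak m_k\}\in\mathfrak M_\theta(S)$ with parameter $\epsilon\in(0,\frac1{10}]$. For each $\sigma\in(0,1)$ there is $C>0$ such that for all $f\in L^1_{loc}(\{\mathfrak m_k\})$, $$\|f^\sharp\|_{L^p(S,\mu)}+\Big(\sum_{k=1}^\infty\epsilon^{k(\theta-p)}\int_{S_{\epsilon^k}(\sigma)}\mathcal E_{\mathfrak m_k}(f,B_{\epsilon^k}(x))^p\,d\mathfrak m_k(x)\Big)^{1/p}\le C\,\|f^\sharp\|_{L^p(X,\mu)}.$$
   Context: A metric measure space is a triple $X=(X,d,\mu)$ with $(X,d)$ a complete separable metric space and $\mu$ a Borel regular measure with $0<\mu(B)<\infty$ for every ball $B$ and $\operatorname{supp}\mu=X$. All balls are closed: $B_r(x)=\{y:d(x,y)\le r\}$; $r(B)$ is the radius. A measure on $X$ means a nonzero Borel regular locally finite (outer) measure. $\mu$ is uniformly locally doubling if for every $R>0$, $\sup_{r\in(0,R]}\sup_x\mu(B_{2r}(x))/\mu(B_r(x))<\infty$. $\operatorname{lip}f(x)=\limsup_{y\to x}|f(y)-f(x)|/d(x,y)$ at accumulation points and $0$ otherwise. For a measure $\mathfrak m$ and Borel $G$ with $0<\mathfrak m(G)<\infty$, $\mathcal E_{\mathfrak m}(f,G)=\inf_{c\in\mathbb R}\frac1{\mathfrak m(G)}\int_G|f-c|d\mathfrak m$. $X\in\mathfrak A_q$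 if $\mu$ is uniformly locally doubling and for every $R>0$ there are $C>0,\lambda\ge1$ with $\mathcal E_\mu(f,B_r(x))\le Cr(\frac1{\mu(B_{\lambda r}(x))}\int_{B_{\lambda r}(x)}(\operatorname{lip}f)^qd\mu)^{1/q}$ for all Lipschitz $f$, $x$, $r\in(0,R]$. For $\theta\ge0$: $\mathcal H_{\theta,\delta}(E)=\inf\{\sum_i\mu(B_{r_i}(x_i))/r_i^\theta:E\subset\bigcup_iB_{r_i}(x_i),\ r_i<\delta\}$. $S\in\mathcal{LCR}_\theta(X)$ if there is $\lambda>0$ with $\mathcal H_{\theta,r}(B_r(x)\cap S)\ge\lambda\mu(B_r(x))/r^\theta$ for all $x\in S$, $r\in(0,1]$. $\{\mathfrak m_k\}_{k=0}^\infty\in\mathfrak M_\theta(S)$ (parameter $\epsilon$) means: (M1) $\operatorname{supp}\mathfrak m_k=S$; (M2) $\exists C_1$: $\mathfrak m_k(B_r(x))\le C_1\mu(B_r(x))/r^\theta$ for all $k$, $x\in X$, $r\in(0,\epsilon^k]$; (M3) $\exists C_2$: $\mathfrak m_k(B_r(x))\ge C_2\mu(B_r(x))/r^\theta$ for all $k$, $x\in S$, $r\in[\epsilon^k,1]$; (M4) $\mathfrak m_k=w_k\mathfrak m_0$, $w_k\in L^\infty(\mathfrak m_0)$, $\exists C_3$: $\epsilon^{\theta j}/C_3\le w_k/w_{k+j}\le C_3$ $\mathfrak m_0$-a.e. on $S$ for all $k,j$. $L^1_{loc}(\{\mathfrak m_k\})=\bigcap_kL^1_{loc}(\mathfrak m_k)$.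 For $r>0$, $k(r)=\max\{k\in\mathbb Z:r\le\epsilon^k\}$. $\widetilde{\mathcal E}_{\mathfrak m}(f,B_r(x))=\mathcal E_{\mathfrak m}(f,B_{2r}(x))$ if $B_r(x)\cap\operatorname{supp}\mathfrak m\ne\emptyset$, else $0$. $f^\sharp(x)=\sup_{r\in(0,1]}r^{-1}\widetilde{\mathcal E}_{\mathfrak m_{k(r)}}(f,B_r(x))$ for $x\in X$. A ball $B$ is $(S,\sigma)$-porous if there is a ball $B'\subset B\setminus S$ with $r(B')\ge\sigma r(B)$; $S_r(\sigma)=\{x\in S:B_r(x)\text{ is }(S,\sigma)\text{-porous}\}$. *)

theory Defs
  imports "HOL-Analysis.Analysis"
begin

definition epowr :: "ennreal \<Rightarrow> real \<Rightarrow> ennreal" where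
  "epowr x a = (if x = \<infinity> then \<infinity> else ennreal (enn2real x powr a))"

definition mm_space :: "'a::polish_space measure \<Rightarrow> bool" where
  "mm_space \<mu> \<longleftrightarrow> sets \<mu> = sets borel \<and>
     (\<forall>x r. 0 < r \<longrightarrow> 0 < emeasure \<mu> (cball x r) \<and> emeasure \<mu> (cball x r) < \<infinity>)"

definition supp_m :: "'a::metric_space measure \<Rightarrow> 'a set" where
  "supp_m m = {x. \<forall>U. open U \<and> x \<in> U \<longrightarrow> 0 < emeasure m U}"

definition is_measure_on :: "'a::metric_space measure \<Rightarrow> bool" where
  "is_measure_on m \<longleftrightarrow> sets m = sets borel \<and> emeasure m UNIV \<noteq> 0 \<and>
     (\<forall>x. \<exists>U. open U \<and> x \<in> U \<and> emeasure m U < \<infinity>)"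

definition unif_loc_doubling :: "'a::metric_space measure \<Rightarrow> bool" where
  "unif_loc_doubling \<mu> \<longleftrightarrow> (\<forall>R>0. \<exists>D::real. \<forall>r x. 0 < r \<and> r \<le> R \<longrightarrow>
      emeasure \<mu> (cball x (2*r)) \<le> ennreal D * emeasure \<mu> (cball x r))"

definition lip :: "('a::metric_space \<Rightarrow> real) \<Rightarrow> 'a \<Rightarrow> ennreal" where
  "lip f x = (if x islimpt UNIV
     then Limsup (at x) (\<lambda>y. ennreal (\<bar>f y - f x\<bar> / dist x y)) else 0)"

definition osc :: "'a measure \<Rightarrow> ('a \<Rightarrow> real) \<Rightarrow> 'a set \<Rightarrow> ennreal" where
  "osc m f G = (INF c::real. (\<integral>\<^sup>+x\<in>G. ennreal \<bar>f x - c\<bar> \<partial>m) / emeasure m G)"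

definition class_A :: "real \<Rightarrow> 'a::polish_space measure \<Rightarrow> bool" where
  "class_A q \<mu> \<longleftrightarrow> mm_space \<mu> \<and> unif_loc_doubling \<mu> \<and>
     (\<forall>R>0. \<exists>C::real. \<exists>lam::real. C > 0 \<and> lam \<ge> 1 \<and>
        (\<forall>f x r. (\<exists>L. L-lipschitz_on UNIV f) \<and> 0 < r \<and> r \<le> R \<longrightarrow>
           osc \<mu> f (cball x r) \<le> ennreal (C * r) *
             epowr ((\<integral>\<^sup>+y\<in>cball x (lam*r). epowr (lip f y) q \<partial>\<mu>)
                    / emeasure \<mu> (cball x (lam*r))) (1/q)))"

text \<open>Codimension-theta Hausdorff content at scale delta (countable covers by closed balls
  of radii in (0,delta), indexed by a set I of naturals).\<close>
definition Hcont :: "'a::metric_space measure \<Rightarrow> real \<Rightarrow> real \<Rightarrow> 'a set \<Rightarrow> ennreal" where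
  "Hcont \<mu> \<theta> \<delta> E = (INF c \<in> {(I, x, r). (I::nat set, x::nat \<Rightarrow> 'a, r::nat \<Rightarrow> real) = (I, x, r) \<and>
        (\<forall>i\<in>I. 0 < r i \<and> r i < \<delta>) \<and> E \<subseteq> (\<Union>i\<in>I. cball (x i) (r i))}.
      (case c of (I, x, r) \<Rightarrow>
        (\<Sum>i. if i \<in> I then emeasure \<mu> (cball (x i) (r i)) / ennreal (r i powr \<theta>) else 0)))"

definition LCR :: "'a::metric_space measure \<Rightarrow> real \<Rightarrow> 'a set \<Rightarrow> bool" where
  "LCR \<mu> \<theta> S \<longleftrightarrow> (\<exists>lam::real. lam > 0 \<and> (\<forall>x\<in>S. \<forall>r. 0 < r \<and> r \<le> 1 \<longrightarrow>
      Hcont \<mu> \<theta> r (cball x r \<inter> S) \<ge> ennreal lam * emeasure \<mu> (cball x r) / ennreal (r powr \<theta>)))"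

definition M_class :: "'a::metric_space measure \<Rightarrow> real \<Rightarrow> 'a set \<Rightarrow> real \<Rightarrow> (nat \<Rightarrow> 'a measure) \<Rightarrow> bool" where
  "M_class \<mu> \<theta> S \<epsilon> m \<longleftrightarrow>
     (\<forall>k. is_measure_on (m k)) \<and>
     (\<forall>k. supp_m (m k) = S) \<and>
     (\<exists>C1::real. \<forall>k x r. 0 < r \<and> r \<le> \<epsilon> ^ k \<longrightarrow>
        emeasure (m k) (cball x r) \<le> ennreal C1 * emeasure \<mu> (cball x r) / ennreal (r powr \<theta>)) \<and>
     (\<exists>C2::real. C2 > 0 \<and> (\<forall>k. \<forall>x\<in>S. \<forall>r. \<epsilon> ^ k \<le> r \<and> r \<le> 1 \<longrightarrow>
        emeasure (m k) (cball x r) \<ge> ennreal C2 * emeasure \<mu> (cball x r) / ennreal (r powr \<theta>))) \<and>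
     (\<exists>w :: nat \<Rightarrow> 'a \<Rightarrow> real.
        (\<forall>k. w k \<in> borel_measurable borel \<and> (\<forall>x. 0 \<le> w k x) \<and>
             (\<exists>M. AE x in m 0. \<bar>w k x\<bar> \<le> M) \<and>
             m k = density (m 0) (\<lambda>x. ennreal (w k x))) \<and>
        (\<exists>C3::real. C3 > 0 \<and> (\<forall>k j. AE x in m 0. x \<in> S \<longrightarrow>
            0 < w (k + j) x \<and>
            \<epsilon> powr (\<theta> * real j) / C3 \<le> w k x / w (k + j) x \<and>
            w k x / w (k + j) x \<le> C3)))"

definition L1loc :: "(nat \<Rightarrow> 'a::metric_space measure) \<Rightarrow> ('a \<Rightarrow> real) \<Rightarrow> bool" where
  "L1loc m f \<longleftrightarrow> (\<forall>k x r. set_integrable (m k) (cball x r) f)"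

text \<open>k(r) = max {k : r \<le> eps^k}; for r in (0,1] this is a natural number.\<close>
definition kr :: "real \<Rightarrow> real \<Rightarrow> nat" where
  "kr \<epsilon> r = (GREATEST k::nat. r \<le> \<epsilon> ^ k)"

definition osc_t :: "'a::metric_space measure \<Rightarrow> ('a \<Rightarrow> real) \<Rightarrow> 'a \<Rightarrow> real \<Rightarrow> ennreal" where
  "osc_t m f x r = (if cball x r \<inter> supp_m m \<noteq> {} then osc m f (cball x (2*r)) else 0)"

definition sharp :: "real \<Rightarrow> (nat \<Rightarrow> 'a::metric_space measure) \<Rightarrow> ('a \<Rightarrow> real) \<Rightarrow> 'a \<Rightarrow> ennreal" where
  "sharp \<epsilon> m f x = (SUP r \<in> {0<..1}. ennreal (1 / r) * osc_t (m (kr \<epsilon> r)) f x r)"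

definition porous_pts :: "'a::metric_space set \<Rightarrow> real \<Rightarrow> real \<Rightarrow> 'a set" where
  "porous_pts S r \<sigma> = {x \<in> S. \<exists>y s. s > 0 \<and> s \<ge> \<sigma> * r \<and> cball y s \<subseteq> cball x r - S}"

end

theory Submission
  imports Defs
begin

(*
  The first term is harmless because S is a subset of X. For the porous term fix a scale
  r = eps^k and x in S whose ball B(x,r) contains a hole B(y,s) in the complement of S with
  s >= sigma r. By (M2)-(M4) the measures m_k of balls of radius about r near S are
  comparable, so the oscillation of f on B(x,r) is at most a constant times r f#(z) for every z
  in the hole. Averaging over B(y,s/2) and using doubling, osc^p at x is bounded by
  r^(p-theta) times an integral of (f#)^p against a kernel in z supported on
  {z : dist(x,z) <= r, sigma r/2 <= dist(z,S) <= r}. Integrating in x against m_k and exchanging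
  the integrals, (M2) bounds the k-th term of the sum by the integral of (f#)^p over the annulus
  {sigma eps^k/2 <= dist(.,S) <= eps^k}, and these annuli have bounded overlap.
  Since f# need not be measurable, (f#)^p is replaced by a measurable minorant with the same
  integral which dominates every measurable minorant almost everywhere.
*)

section \<open>Arithmetic of extended nonnegative reals\<close>

lemma ennreal_cmult_divide_cancel:
  assumes "0 < K" shows "ennreal K * (x / ennreal K) = x"
  using assms by (simp add: ennreal_times_divide ennreal_mult_divide_eq[of "ennreal K" x, unfolded mult.commute[of x]])

lemma epowr_mono:
  assumes "0 < a" "x \<le> y" shows "epowr x a \<le> epowr y a"
proof (cases "y = \<infinity>")
  case False
  then have "x \<noteq> \<infinity>" using assms(2) by (auto simp: top_unique)
  then show ?thesis using False assms
    by (auto simp: epowr_def intro!: ennreal_leI powr_mono2 enn2real_mono simp: less_top[symmetric])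
qed (simp add: epowr_def)

lemma epowr_cmult:
  assumes "0 < c" "0 < a" shows "epowr (ennreal c * x) a = ennreal (c powr a) * epowr x a"
proof (cases "x = \<infinity>")
  case True then show ?thesis using assms by (simp add: epowr_def ennreal_mult_top)
next
  case False
  then have "ennreal c * x \<noteq> \<infinity>" by (simp add: ennreal_mult_eq_top_iff)
  then show ?thesis using False assms
    by (simp add: epowr_def enn2real_mult powr_mult ennreal_mult[symmetric])
qed

lemma epowr_add_le_cmult:
  assumes "A \<le> I" "B \<le> ennreal K * I" "0 < K" "0 < p"
  shows "epowr A (1/p) + epowr B (1/p) \<le> ennreal (1 + K powr (1/p)) * epowr I (1/p)"
proof -
  have "epowr A (1/p) + epowr B (1/p) \<le> epowr I (1/p) + epowr (ennreal K * I) (1/p)"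
    using assms by (intro add_mono epowr_mono) auto
  also have "\<dots> = ennreal (1 + K powr (1/p)) * epowr I (1/p)"
    using assms by (simp add: epowr_cmult ennreal_plus distrib_right)
  finally show ?thesis .
qed

section \<open>Lower envelopes\<close>

definition lower_envelope :: "'a measure \<Rightarrow> ('a \<Rightarrow> ennreal) \<Rightarrow> ('a \<Rightarrow> ennreal) \<Rightarrow> bool" where
  "lower_envelope M g h \<longleftrightarrow> h \<in> borel_measurable M \<and> h \<le> g \<and>
     integral\<^sup>N M h = integral\<^sup>N M g \<and>
     (\<forall>u \<in> borel_measurable M. u \<le> g \<longrightarrow> (AE x in M. u x \<le> h x))"

lemma lower_envelope_exists:
  fixes g :: "'a \<Rightarrow> ennreal"
  assumes fin: "integral\<^sup>N M g < \<infinity>"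
  obtains h where "lower_envelope M g h"
proof -
  let ?A = "integral\<^sup>S M ` {s. simple_function M s \<and> s \<le> g}"
  have "integral\<^sup>S M (\<lambda>_. 0) \<in> ?A" by (intro imageI) (auto simp: le_fun_def)
  then have "?A \<noteq> {}" by blast
  from ennreal_Sup_countable_SUP[OF this]
  obtain F :: "nat \<Rightarrow> ennreal" where F: "range F \<subseteq> ?A" "Sup ?A = Sup (range F)"
    by blast
  then have "\<forall>n. \<exists>s. simple_function M s \<and> s \<le> g \<and> F n = integral\<^sup>S M s"
    by blast
  then obtain s where s: "\<And>n. simple_function M (s n)" "\<And>n. s n \<le> g"
    "\<And>n. F n = integral\<^sup>S M (s n)"
    by metis
  define h where "h x = (SUP n. s n x)" for x
  have h_meas: "h \<in> borel_measurable M"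
    unfolding h_def using s(1) by (intro borel_measurable_SUP) (auto intro: borel_measurable_simple_function)
  have h_le: "h \<le> g"
    unfolding h_def le_fun_def using s(2) by (auto simp: le_fun_def intro: SUP_least)
  have "integral\<^sup>N M g = (SUP n. F n)"
    using F(2) by (simp add: nn_integral_def)
  also have "\<dots> \<le> integral\<^sup>N M h"
  proof (rule SUP_least)
    fix n
    have "F n = integral\<^sup>N M (s n)" using s(1,3) by (simp add: nn_integral_eq_simple_integral)
    also have "\<dots> \<le> integral\<^sup>N M h" unfolding h_def by (intro nn_integral_mono) (auto intro: SUP_upper)
    finally show "F n \<le> integral\<^sup>N M h" .
  qed
  finally have h_int: "integral\<^sup>N M h = integral\<^sup>N M g"
    using h_le by (metis antisym le_funD nn_integral_mono)
  have "AE x in M. u x \<le> h x" if u: "u \<in> borel_measurable M" "u \<le> g" for u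
  proof -
    \<comment> \<open>max u h is a measurable minorant of g with the same integral as h, so it equals h a.e.\<close>
    define w where "w x = max (u x) (h x)" for x
    have w_meas: "w \<in> borel_measurable M" unfolding w_def using u(1) h_meas by measurable
    have "integral\<^sup>N M h \<le> integral\<^sup>N M w" by (intro nn_integral_mono) (simp add: w_def)
    moreover have "integral\<^sup>N M w \<le> integral\<^sup>N M g"
      using u(2) h_le by (intro nn_integral_mono) (simp add: w_def le_fun_def)
    ultimately have "integral\<^sup>N M w = integral\<^sup>N M h" using h_int by simp
    then have "(\<integral>\<^sup>+ x. w x - h x \<partial>M) = 0"
      using w_meas h_meas h_int fin by (subst nn_integral_diff) (auto simp: w_def)
    then have "AE x in M. w x - h x = 0"
      using w_meas h_meas by (subst (asm) nn_integral_0_iff_AE) auto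
    then show ?thesis
      by (rule eventually_mono) (auto simp: w_def dest: ennreal_minus_eq_0)
  qed
  then show ?thesis using that h_meas h_le h_int unfolding lower_envelope_def by blast
qed

lemma lower_envelope_nn_set_integral_ge:
  assumes env: "lower_envelope M g h" and B: "B \<in> sets M" and "0 < E"
    and ge: "\<And>z. z \<in> B \<Longrightarrow> c \<le> ennreal E * g z"
  shows "c * emeasure M B \<le> ennreal E * (\<integral>\<^sup>+z\<in>B. h z \<partial>M)"
proof -
  define u where "u z = c / ennreal E * indicator B z" for z
  have "u \<in> borel_measurable M"
    unfolding u_def using B by (intro borel_measurable_times_ennreal borel_measurable_indicator) auto
  moreover have "u \<le> g"
    using ge \<open>0 < E\<close> by (auto simp: u_def le_fun_def indicator_def intro: divide_le_posI_ennreal)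
  ultimately have "AE z in M. u z \<le> h z" using env by (auto simp: lower_envelope_def)
  then have "c / ennreal E * emeasure M B \<le> (\<integral>\<^sup>+z\<in>B. h z \<partial>M)"
    using B by (subst nn_integral_cmult_indicator[symmetric])
      (auto simp: u_def indicator_def elim!: eventually_mono intro!: nn_integral_mono_AE)
  then have "ennreal E * (c / ennreal E * emeasure M B) \<le> ennreal E * (\<integral>\<^sup>+z\<in>B. h z \<partial>M)"
    by (rule mult_left_mono) simp
  then show ?thesis
    using \<open>0 < E\<close> by (simp add: mult.assoc[symmetric] ennreal_cmult_divide_cancel)
qed

section \<open>Supports, densities and balls\<close>

lemma compl_supp_m_eq: "- supp_m m = \<Union>{U. open U \<and> emeasure m U = 0}"
  by (auto simp: supp_m_def not_less)

lemma closed_supp_m: "closed (supp_m m)"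
  by (metis (no_types, lifting) closed_def compl_supp_m_eq mem_Collect_eq open_Union)

lemma emeasure_compl_supp_m:
  fixes m :: "'a::{metric_space, second_countable_topology} measure"
  assumes "sets m = sets borel"
  shows "emeasure m (- supp_m m) = 0"
proof -
  define F where "F = {U. open U \<and> emeasure m U = 0}"
  obtain F' where F': "F' \<subseteq> F" "countable F'" "\<Union>F' = \<Union>F"
    using Lindelof[of F] unfolding F_def by auto
  have "\<Union>F' \<in> null_sets m"
    using F' assms unfolding F_def
    by (intro null_sets_UN'[of F' id, simplified]) (auto simp: null_sets_def)
  then show ?thesis
    using F'(3) by (simp add: compl_supp_m_eq F_def null_setsD1)
qed

lemma emeasure_density_le_cmult:
  assumes "f \<in> borel_measurable M" "g \<in> borel_measurable M" "A \<in> sets M"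
    and "AE x in M. f x \<le> c * g x"
  shows "emeasure (density M f) A \<le> c * emeasure (density M g) A"
proof -
  have "emeasure (density M f) A = (\<integral>\<^sup>+x\<in>A. f x \<partial>M)"
    using assms by (simp add: emeasure_density)
  also have "\<dots> \<le> (\<integral>\<^sup>+x\<in>A. c * g x \<partial>M)"
    using assms(4) by (intro nn_integral_mono_AE) (auto elim!: eventually_mono intro: mult_right_mono)
  also have "\<dots> = c * emeasure (density M g) A"
    using assms by (simp add: emeasure_density nn_integral_cmult mult.assoc)
  finally show ?thesis .
qed

lemma M_class_emeasure_Suc_le:
  fixes m :: "nat \<Rightarrow> 'a::{metric_space, second_countable_topology} measure"
  assumes "M_class \<mu> \<theta> S \<epsilon> m" "0 < \<epsilon>"
  obtains L where "0 < L" "\<And>k A. A \<in> sets borel \<Longrightarrow> emeasure (m (Suc k)) A \<le> ennreal L * emeasure (m k) A"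
proof -
  obtain w :: "nat \<Rightarrow> 'a \<Rightarrow> real" and C3 where
    w: "\<forall>k. w k \<in> borel_measurable borel \<and> (\<forall>x. 0 \<le> w k x) \<and> (\<exists>M. AE x in m 0. \<bar>w k x\<bar> \<le> M) \<and>
      m k = density (m 0) (\<lambda>x. ennreal (w k x))" and
    C3: "0 < C3" "\<forall>k j. AE x in m 0. x \<in> S \<longrightarrow> 0 < w (k + j) x \<and>
      \<epsilon> powr (\<theta> * real j) / C3 \<le> w k x / w (k + j) x \<and> w k x / w (k + j) x \<le> C3"
    using assms(1) unfolding M_class_def by blast
  have sets: "sets (m 0) = sets borel" and supp: "supp_m (m 0) = S"
    using assms(1) by (auto simp: M_class_def is_measure_on_def)
  have "- S \<in> null_sets (m 0)"
    using emeasure_compl_supp_m[OF sets] closed_supp_m[of "m 0"] sets supp by (auto intro: null_setsI)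
  from AE_not_in[OF this] have "AE x in m 0. x \<in> S" by simp
  define L where "L = C3 / \<epsilon> powr \<theta>"
  have step: "AE x in m 0. ennreal (w (Suc k) x) \<le> ennreal L * ennreal (w k x)" for k
    using C3(2)[rule_format, of k 1] \<open>AE x in m 0. x \<in> S\<close>
  proof eventually_elim
    case (elim x)
    then have "\<epsilon> powr \<theta> / C3 * w (Suc k) x \<le> w k x"
      by (auto simp: le_divide_eq simp del: times_divide_eq_left)
    then have "\<epsilon> powr \<theta> * w (Suc k) x \<le> C3 * w k x"
      using C3(1) by (simp add: divide_le_eq mult.commute)
    then show ?case
      using assms(2) C3(1) w by (simp add: L_def field_simps ennreal_mult[symmetric] ennreal_leI)
  qed
  show ?thesis
  proof (rule that)
    show "0 < L" using C3(1) assms(2) by (simp add: L_def)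
    have meas: "(\<lambda>x. ennreal (w k x)) \<in> borel_measurable (m 0)" for k
      using w by (subst measurable_cong_sets[OF sets refl]) simp
    show "emeasure (m (Suc k)) A \<le> ennreal L * emeasure (m k) A" if "A \<in> sets borel" for k A
      using w emeasure_density_le_cmult[OF meas meas _ step, of A] that sets by metis
  qed
qed

lemma sigma_finite_measure_cball_finite:
  fixes M :: "'a::{metric_space, second_countable_topology} measure"
  assumes "sets M = sets borel" "0 < r" "\<And>x. emeasure M (cball x r) < \<infinity>"
  shows "sigma_finite_measure M"
proof (rule sigma_finite_measure.intro)
  obtain D :: "'a set" where D: "countable D" "\<And>X. open X \<Longrightarrow> X \<noteq> {} \<Longrightarrow> \<exists>d\<in>D. d \<in> X"
    using countable_dense_exists by blast
  have "\<Union>((\<lambda>d. cball d r) ` D) = UNIV"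
  proof (intro set_eqI iffI UNIV_I)
    fix x
    obtain d where "d \<in> D" "d \<in> ball x r" using D(2)[of "ball x r"] assms(2) by auto
    then show "x \<in> \<Union>((\<lambda>d. cball d r) ` D)" by (intro UN_I[of d]) (auto simp: dist_commute)
  qed
  then show "\<exists>A. countable A \<and> A \<subseteq> sets M \<and> \<Union> A = space M \<and> (\<forall>a\<in>A. emeasure M a \<noteq> \<infinity>)"
    using D(1) assms by (intro exI[of _ "(\<lambda>d. cball d r) ` D"])
      (auto simp: sets_eq_imp_space_eq[OF assms(1)] less_top[symmetric])
qed

lemma borel_measurable_emeasure_cball:
  fixes M :: "'a::{metric_space, second_countable_topology} measure"
  assumes "sigma_finite_measure M" "sets M = sets borel"
  shows "(\<lambda>z. emeasure M (cball z r)) \<in> borel_measurable borel"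
proof -
  define Q where "Q = {q :: 'a \<times> 'a. dist (fst q) (snd q) \<le> r}"
  have "closed Q" unfolding Q_def by (intro closed_Collect_le continuous_intros)
  then have "(indicator Q :: _ \<Rightarrow> ennreal) \<in> borel_measurable (borel \<Otimes>\<^sub>M borel)"
    unfolding borel_prod by (intro borel_measurable_indicator) auto
  then have "(\<lambda>(z, y). indicator Q (z, y) :: ennreal) \<in> borel_measurable (borel \<Otimes>\<^sub>M M)"
    by (subst measurable_cong_sets[OF sets_pair_measure_cong[OF refl assms(2)] refl]) (simp add: case_prod_beta')
  from sigma_finite_measure.borel_measurable_nn_integral[OF assms(1) this]
  show ?thesis
    using assms(2) by (simp add: Q_def indicator_def cball_def flip: nn_integral_indicator)
qed

lemma cball_subset_cball_dist:
  assumes "dist x y + r \<le> s" shows "cball y r \<subseteq> cball x s"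
proof
  fix z assume "z \<in> cball y r"
  then show "z \<in> cball x s" using assms dist_triangle[of x z y] by simp
qed

lemma porous_half_ball_subset:
  assumes "cball y s \<subseteq> cball x r - S" "x \<in> S" "0 < s"
  shows "cball y (s/2) \<subseteq> cball x r \<inter> {z. s/2 \<le> infdist z S \<and> infdist z S \<le> r}"
proof
  fix z assume z: "z \<in> cball y (s/2)"
  then have "z \<in> cball x r" using assms(1,3) by (auto simp: subset_iff)
  moreover have "s \<le> infdist y S"
  proof -
    have far: "s < dist y t" if "t \<in> S" for t using assms(1) that by (force simp: subset_iff not_le)
    have "S \<noteq> {}" using assms(2) by auto
    then show ?thesis
      unfolding infdist_notempty[OF \<open>S \<noteq> {}\<close>] by (rule cINF_greatest) (use far in force)
  qed
  ultimately show "z \<in> cball x r \<inter> {z. s/2 \<le> infdist z S \<and> infdist z S \<le> r}"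
    using z infdist_triangle[of y S z] infdist_le[OF assms(2), of z]
    by (auto simp: dist_commute)
qed

lemma suminf_indicator_scales_le:
  fixes \<epsilon> \<sigma> \<delta> :: real
  assumes "0 < \<epsilon>" "\<epsilon> < 1" "\<epsilon> ^ N < \<sigma> / 2"
  shows "(\<Sum>k. indicator {k. \<sigma> * \<epsilon> ^ k / 2 \<le> \<delta> \<and> \<delta> \<le> \<epsilon> ^ k} k :: ennreal) \<le> of_nat (2 * N + 1)"
proof -
  define T where "T = {k. \<sigma> * \<epsilon> ^ k / 2 \<le> \<delta> \<and> \<delta> \<le> \<epsilon> ^ k}"
  have close: "k' - k < N" if "k \<in> T" "k' \<in> T" "k \<le> k'" for k k'
  proof (rule ccontr)
    assume "\<not> k' - k < N"
    then have "\<epsilon> ^ (k' - k) \<le> \<epsilon> ^ N" using assms(1,2) by (intro power_decreasing) auto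
    moreover have "\<sigma> * \<epsilon> ^ k / 2 \<le> \<epsilon> ^ k * \<epsilon> ^ (k' - k)"
      using that by (auto simp: T_def simp flip: power_add)
    then have "\<sigma> / 2 \<le> \<epsilon> ^ (k' - k)" using assms(1) by (simp add: field_simps)
    ultimately show False using assms(3) by linarith
  qed
  show ?thesis
  proof (cases "T = {}")
    case False
    then obtain k0 where k0: "k0 \<in> T" by auto
    have "T \<subseteq> {k0 - N..k0 + N}"
      using close[OF k0] close[OF _ k0] by (force simp: not_le)
    then have "(\<Sum>k. indicator T k :: ennreal) = (\<Sum>k\<in>{k0 - N..k0 + N}. indicator T k)"
      by (intro suminf_finite) (auto simp: indicator_def)
    also have "\<dots> \<le> of_nat (card {k0 - N..k0 + N})"
      using sum_mono[of "{k0 - N..k0 + N}" "indicator T" "\<lambda>_. 1 :: ennreal"] by (simp add: indicator_def)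
    also have "\<dots> \<le> of_nat (2 * N + 1)" by (intro of_nat_mono) simp
    finally show ?thesis unfolding T_def .
  qed (simp add: T_def)
qed

section \<open>Oscillations and the sharp maximal function\<close>

lemma osc_subset_le:
  assumes "A \<subseteq> G" "G \<in> sets m" "A \<in> sets m" "0 < emeasure m A" "emeasure m G < \<infinity>"
    "emeasure m G \<le> ennreal K * emeasure m A" "0 < K"
  shows "osc m f A \<le> ennreal K * osc m f G"
proof -
  have mG_pos: "0 < emeasure m G" using assms(1-4) emeasure_mono[of A G m] by auto
  have "osc m f A / ennreal K \<le> (\<integral>\<^sup>+x\<in>G. ennreal \<bar>f x - c\<bar> \<partial>m) / emeasure m G" for c
  proof -
    let ?a = "\<integral>\<^sup>+x\<in>A. ennreal \<bar>f x - c\<bar> \<partial>m" and ?b = "\<integral>\<^sup>+x\<in>G. ennreal \<bar>f x - c\<bar> \<partial>m"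
    have "?a \<le> ?b" using assms(1)
      by (intro nn_integral_mono) (auto simp: indicator_def)
    also have "?b = ?b / emeasure m G * emeasure m G"
      using mG_pos assms(5) by (simp add: ennreal_divide_times)
    also have "\<dots> \<le> ?b / emeasure m G * (ennreal K * emeasure m A)"
      using assms(6) by (intro mult_left_mono) auto
    finally have "?a / emeasure m A \<le> ennreal K * (?b / emeasure m G)"
      using assms(4) by (intro divide_le_posI_ennreal) (auto simp: ac_simps)
    moreover have "osc m f A \<le> ?a / emeasure m A" unfolding osc_def by (rule INF_lower) simp
    ultimately have "osc m f A \<le> ennreal K * (?b / emeasure m G)" by order
    then show ?thesis
      using assms(7) by (intro divide_le_posI_ennreal) auto
  qed
  then have "osc m f A / ennreal K \<le> osc m f G"
    unfolding osc_def[of m f G] by (rule INF_greatest)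
  then have "ennreal K * (osc m f A / ennreal K) \<le> ennreal K * osc m f G"
    by (rule mult_left_mono) simp
  then show ?thesis
    using assms(7) by (simp add: ennreal_cmult_divide_cancel)
qed

lemma kr_power:
  assumes "0 < \<epsilon>" "\<epsilon> < 1" shows "kr \<epsilon> (\<epsilon> ^ k) = k"
  unfolding kr_def
proof (rule Greatest_equality)
  show "\<And>y. \<epsilon> ^ k \<le> \<epsilon> ^ y \<Longrightarrow> y \<le> k"
    using assms by (meson not_le power_strict_decreasing)
qed simp

lemma osc_le_sharp:
  assumes "0 < r" "r \<le> 1" "cball z r \<inter> supp_m (m (kr \<epsilon> r)) \<noteq> {}"
  shows "osc (m (kr \<epsilon> r)) f (cball z (2 * r)) \<le> ennreal r * sharp \<epsilon> m f z"
proof -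
  have "ennreal (1 / r) * osc (m (kr \<epsilon> r)) f (cball z (2 * r)) \<le> sharp \<epsilon> m f z"
    unfolding sharp_def using assms by (intro SUP_upper2[of r]) (auto simp: osc_t_def)
  then have "ennreal r * (ennreal (1 / r) * osc (m (kr \<epsilon> r)) f (cball z (2 * r))) \<le> ennreal r * sharp \<epsilon> m f z"
    by (rule mult_left_mono) simp
  then show ?thesis
    using assms(1) by (simp add: mult.assoc[symmetric] ennreal_mult[symmetric])
qed

section \<open>Scale-comparable measures\<close>

(* upper, lower and step are (M2), (M3) and the consequence of (M4) for consecutive scales. *)
locale sharp_setting =
  fixes \<mu> :: "'a::{metric_space, second_countable_topology} measure"
    and m :: "nat \<Rightarrow> 'a measure" and S :: "'a set" and \<epsilon> \<theta> D C1 C2 L :: real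
  assumes sets_\<mu>: "sets \<mu> = sets borel"
    and cball_pos: "\<And>x r. 0 < r \<Longrightarrow> 0 < emeasure \<mu> (cball x r)"
    and cball_finite: "\<And>x r. 0 < r \<Longrightarrow> emeasure \<mu> (cball x r) < \<infinity>"
    and doubling: "\<And>x r. 0 < r \<Longrightarrow> r \<le> 1 \<Longrightarrow>
      emeasure \<mu> (cball x (2 * r)) \<le> ennreal D * emeasure \<mu> (cball x r)"
    and sets_m: "\<And>k. sets (m k) = sets borel"
    and supp_m_eq: "\<And>k. supp_m (m k) = S"
    and upper: "\<And>k x r. 0 < r \<Longrightarrow> r \<le> \<epsilon> ^ k \<Longrightarrow>
      emeasure (m k) (cball x r) \<le> ennreal C1 * emeasure \<mu> (cball x r) / ennreal (r powr \<theta>)"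
    and lower: "\<And>k x r. x \<in> S \<Longrightarrow> \<epsilon> ^ k \<le> r \<Longrightarrow> r \<le> 1 \<Longrightarrow>
      ennreal C2 * emeasure \<mu> (cball x r) / ennreal (r powr \<theta>) \<le> emeasure (m k) (cball x r)"
    and step: "\<And>k A. A \<in> sets borel \<Longrightarrow> emeasure (m (Suc k)) A \<le> ennreal L * emeasure (m k) A"
    and C1_pos: "0 < C1" and C2_pos: "0 < C2" and L_pos: "0 < L"
    and eps_pos: "0 < \<epsilon>" and eps_le: "\<epsilon> \<le> 1/3" and theta_nonneg: "0 \<le> \<theta>"
begin

definition vol :: "'a \<Rightarrow> real \<Rightarrow> real" where
  "vol x r = enn2real (emeasure \<mu> (cball x r))"

lemma emeasure_cball_eq_vol: "0 < r \<Longrightarrow> emeasure \<mu> (cball x r) = ennreal (vol x r)"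
  using cball_finite[of r x] by (simp add: vol_def less_top ennreal_enn2real)

lemma vol_pos: "0 < r \<Longrightarrow> 0 < vol x r"
  using cball_pos[of r x] cball_finite[of r x] by (simp add: vol_def enn2real_positive_iff less_top)

lemma vol_mono: "0 < r' \<Longrightarrow> cball x r \<subseteq> cball y r' \<Longrightarrow> vol x r \<le> vol y r'"
  unfolding vol_def using cball_finite[of r' y] sets_\<mu>
  by (intro enn2real_mono emeasure_mono) auto

lemma D_ge_1: "1 \<le> D"
proof -
  fix x :: 'a
  have "emeasure \<mu> (cball x 1) * 1 \<le> emeasure \<mu> (cball x 1) * ennreal D"
    using emeasure_mono[of "cball x 1" "cball x 2" \<mu>] doubling[of 1 x] sets_\<mu>
    by (simp add: subset_cball mult.commute)
  moreover have "emeasure \<mu> (cball x 1) \<noteq> 0" "emeasure \<mu> (cball x 1) \<noteq> top"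
    using cball_pos[of 1 x] cball_finite[of 1 x] by auto
  ultimately have "1 \<le> ennreal D"
    by (metis ennreal_mult_le_mult_iff)
  then show ?thesis by simp
qed

lemma vol_doubling: "0 < r \<Longrightarrow> r \<le> 1 \<Longrightarrow> vol x (2 * r) \<le> D * vol x r"
  using doubling[of r x] D_ge_1 vol_pos[of r x]
  by (simp add: emeasure_cball_eq_vol ennreal_mult[symmetric])

lemma vol_doubling_power: "0 < \<rho> \<Longrightarrow> \<rho> \<le> 2 \<Longrightarrow> vol x \<rho> \<le> D ^ n * vol x (\<rho> / 2 ^ n)"
proof (induction n arbitrary: \<rho>)
  case (Suc n)
  have "vol x \<rho> \<le> D * vol x (\<rho> / 2)"
    using vol_doubling[of "\<rho> / 2" x] Suc.prems by simp
  also have "\<dots> \<le> D * (D ^ n * vol x (\<rho> / 2 / 2 ^ n))"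
    using Suc.prems D_ge_1 by (intro mult_left_mono Suc.IH) auto
  finally show ?case by (simp add: mult.assoc)
qed simp

lemma m_cball_le:
  "0 < r \<Longrightarrow> r \<le> \<epsilon> ^ k \<Longrightarrow> emeasure (m k) (cball x r) \<le> ennreal (C1 * vol x r / r powr \<theta>)"
  using upper[of r k x] C1_pos vol_pos[of r x]
  by (simp add: emeasure_cball_eq_vol ennreal_mult[symmetric] divide_ennreal)

lemma m_cball_ge:
  assumes "x \<in> S" "\<epsilon> ^ k \<le> r" "r \<le> 1"
  shows "ennreal (C2 * vol x r / r powr \<theta>) \<le> emeasure (m k) (cball x r)"
proof -
  have "0 < r" using assms(2) eps_pos by (meson less_le_trans zero_less_power)
  then show ?thesis
    using lower[OF assms] C2_pos vol_pos[of r x]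
    by (simp add: emeasure_cball_eq_vol ennreal_mult[symmetric] divide_ennreal)
qed

lemma m_cball_pos: "x \<in> S \<Longrightarrow> 0 < r \<Longrightarrow> 0 < emeasure (m k) (cball x r)"
proof -
  assume "x \<in> S" "0 < r"
  then have "0 < emeasure (m k) (ball x r)"
    using supp_m_eq[of k] by (auto simp: supp_m_def)
  also have "\<dots> \<le> emeasure (m k) (cball x r)" using sets_m by (intro emeasure_mono) auto
  finally show ?thesis .
qed

lemma sigma_finite_\<mu>: "sigma_finite_measure \<mu>"
  using cball_finite[of 1] by (intro sigma_finite_measure_cball_finite[OF sets_\<mu>, of 1]) auto

lemma sigma_finite_m: "sigma_finite_measure (m k)"
  using m_cball_le[of "\<epsilon> ^ k" k] eps_pos
  by (intro sigma_finite_measure_cball_finite[OF sets_m, of "\<epsilon> ^ k"])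
    (auto intro: le_less_trans[OF _ ennreal_less_top])

lemma borel_measurable_vol: "(\<lambda>z. vol z r) \<in> borel_measurable borel"
  unfolding vol_def
  by (intro borel_measurable_enn2real borel_measurable_emeasure_cball sigma_finite_\<mu> sets_\<mu>)

definition ratio_const :: real where
  "ratio_const = L * C1 * D ^ 2 / C2"

lemma ratio_const_pos: "0 < ratio_const"
  using L_pos C1_pos C2_pos D_ge_1 by (simp add: ratio_const_def)

(* Passing to m_(k-1) by (M4) makes (M2) available at the radius 3 eps^k. *)
lemma cball_ratio:
  assumes "0 < k" "x \<in> S" "dist x z \<le> \<epsilon> ^ k"
  shows "emeasure (m k) (cball z (2 * \<epsilon> ^ k)) \<le> ennreal ratio_const * emeasure (m k) (cball x (\<epsilon> ^ k))"
proof -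
  obtain j where k: "k = Suc j" using assms(1) gr0_implies_Suc by blast
  define r where "r = \<epsilon> ^ k"
  have r_pos: "0 < r" using eps_pos by (simp add: r_def)
  have "3 * \<epsilon> * \<epsilon> ^ j \<le> 1 * \<epsilon> ^ j"
    using eps_pos eps_le by (intro mult_right_mono) auto
  then have r_le: "3 * r \<le> \<epsilon> ^ j" by (simp add: r_def k mult.assoc)
  have "\<epsilon> ^ j \<le> 1" using eps_pos eps_le by (simp add: power_le_one)
  have "emeasure (m k) (cball z (2 * r)) \<le> emeasure (m k) (cball x (3 * r))"
    using assms(3) sets_m by (intro emeasure_mono cball_subset_cball_dist) (auto simp: r_def)
  also have "\<dots> \<le> ennreal L * emeasure (m j) (cball x (3 * r))"
    using step[of _ j] by (simp add: k)
  also have "\<dots> \<le> ennreal L * ennreal (C1 * vol x (3 * r) / (3 * r) powr \<theta>)"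
    using r_pos r_le by (intro mult_left_mono m_cball_le) auto
  also have "\<dots> \<le> ennreal L * ennreal (C1 * (D ^ 2 * vol x r) / r powr \<theta>)"
  proof (intro mult_left_mono ennreal_leI frac_le)
    have "vol x (3 * r) \<le> vol x (4 * r)" using r_pos by (intro vol_mono) (auto simp: subset_cball)
    also have "\<dots> \<le> D ^ 2 * vol x (4 * r / 2 ^ 2)"
      using r_pos r_le \<open>\<epsilon> ^ j \<le> 1\<close> by (intro vol_doubling_power) auto
    finally show "vol x (3 * r) \<le> D ^ 2 * vol x r" by simp
    show "r powr \<theta> \<le> (3 * r) powr \<theta>" using r_pos theta_nonneg by (intro powr_mono2) auto
  qed (use C1_pos D_ge_1 vol_pos[OF r_pos, of x] r_pos in auto)
  also have "\<dots> = ennreal ratio_const * ennreal (C2 * vol x r / r powr \<theta>)"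
    using L_pos C1_pos C2_pos D_ge_1 vol_pos[OF r_pos, of x] ratio_const_pos
    by (simp add: ratio_const_def ennreal_mult[symmetric])
  also have "\<dots> \<le> ennreal ratio_const * emeasure (m k) (cball x r)"
    using assms(2) r_pos eps_pos eps_le by (intro mult_left_mono m_cball_ge) (auto simp: r_def power_le_one)
  finally show ?thesis by (simp add: r_def)
qed

lemma osc_cball_le_sharp:
  assumes "0 < k" "x \<in> S" "dist x z \<le> \<epsilon> ^ k"
  shows "osc (m k) f (cball x (\<epsilon> ^ k)) \<le> ennreal (ratio_const * \<epsilon> ^ k) * sharp \<epsilon> m f z"
proof -
  define r where "r = \<epsilon> ^ k"
  have r_pos: "0 < r" and r_le: "r \<le> 1" and kr: "kr \<epsilon> r = k"
    using eps_pos eps_le by (auto simp: r_def power_le_one kr_power)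
  have fin: "emeasure (m k) (cball x r) < \<infinity>"
    using m_cball_le[of r k x] r_pos by (auto simp: r_def intro: le_less_trans[OF _ ennreal_less_top])
  have "osc (m k) f (cball x r) \<le> ennreal ratio_const * osc (m k) f (cball z (2 * r))"
  proof (rule osc_subset_le)
    show "cball x r \<subseteq> cball z (2 * r)"
      using assms(3) by (intro cball_subset_cball_dist) (simp add: r_def dist_commute)
    show "emeasure (m k) (cball z (2 * r)) \<le> ennreal ratio_const * emeasure (m k) (cball x r)"
      using cball_ratio[OF assms] by (simp add: r_def)
    then show "emeasure (m k) (cball z (2 * r)) < \<infinity>"
      using fin by (auto simp: ennreal_mult_less_top intro: le_less_trans)
  qed (use sets_m m_cball_pos[OF assms(2) r_pos] ratio_const_pos in auto)
  also have "\<dots> \<le> ennreal ratio_const * (ennreal r * sharp \<epsilon> m f z)"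
  proof (intro mult_left_mono osc_le_sharp[OF r_pos r_le, where \<epsilon> = \<epsilon>, unfolded kr])
    have "x \<in> cball z r \<inter> S" using assms(2,3) by (simp add: r_def dist_commute)
    then show "cball z r \<inter> supp_m (m k) \<noteq> {}" using supp_m_eq by auto
  qed simp
  finally show ?thesis
    using ratio_const_pos r_pos by (simp add: r_def ennreal_mult mult.assoc)
qed

(* N doublings lead from radius 2 r down to sigma r / 2, the size of the hole at a porous point. *)
context
  fixes \<sigma> p :: real and N :: nat and f :: "'a \<Rightarrow> real" and gs :: "'a \<Rightarrow> ennreal"
  assumes sigma_pos: "0 < \<sigma>" and p_pos: "0 < p" and N: "4 \<le> \<sigma> * 2 ^ N"
    and envelope: "lower_envelope \<mu> (\<lambda>x. epowr (sharp \<epsilon> m f x) p) gs"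
begin

definition scale_annulus :: "nat \<Rightarrow> 'a set" where
  "scale_annulus k = {z. \<sigma> * \<epsilon> ^ k / 2 \<le> infdist z S \<and> infdist z S \<le> \<epsilon> ^ k}"

(* The factor 1/vol z (eps^k) is what lets (M2) bound the integral in x after Fubini. *)
definition porous_kernel :: "nat \<Rightarrow> 'a \<Rightarrow> 'a \<Rightarrow> ennreal" where
  "porous_kernel k x z =
     gs z * indicator (scale_annulus k) z * ennreal (1 / vol z (\<epsilon> ^ k)) * indicator (cball z (\<epsilon> ^ k)) x"

lemma scale_annulus_closed: "closed (scale_annulus k)"
  unfolding scale_annulus_def by (intro closed_Collect_conj closed_Collect_le continuous_intros)

lemma borel_measurable_gs: "gs \<in> borel_measurable borel"
  using envelope by (simp add: lower_envelope_def measurable_cong_sets[OF sets_\<mu> refl])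

lemma borel_measurable_porous_kernel: "(\<lambda>(x, z). porous_kernel k x z) \<in> borel_measurable (m k \<Otimes>\<^sub>M \<mu>)"
proof -
  note [measurable] = borel_measurable_gs borel_measurable_vol
  have [measurable]: "scale_annulus k \<in> sets borel" using scale_annulus_closed by simp
  have "closed {q :: 'a \<times> 'a. fst q \<in> cball (snd q) (\<epsilon> ^ k)}"
    unfolding mem_cball by (intro closed_Collect_le continuous_intros)
  then have [measurable]: "Measurable.pred (borel \<Otimes>\<^sub>M borel) (\<lambda>q :: 'a \<times> 'a. fst q \<in> cball (snd q) (\<epsilon> ^ k))"
    unfolding pred_def borel_prod by simp
  have "(\<lambda>(x, z). porous_kernel k x z) \<in> borel_measurable (borel \<Otimes>\<^sub>M borel)"
    unfolding porous_kernel_def by measurable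
  then show ?thesis
    by (subst measurable_cong_sets[OF sets_pair_measure_cong[OF sets_m sets_\<mu>] refl])
qed

lemma porous_kernel_integral_le:
  "(\<integral>\<^sup>+x. porous_kernel k x z \<partial>m k) \<le> gs z * indicator (scale_annulus k) z * ennreal (C1 / (\<epsilon> ^ k) powr \<theta>)"
proof -
  define r where "r = \<epsilon> ^ k"
  have r_pos: "0 < r" using eps_pos by (simp add: r_def)
  have "(\<integral>\<^sup>+x. porous_kernel k x z \<partial>m k)
      = gs z * indicator (scale_annulus k) z * ennreal (1 / vol z r) * emeasure (m k) (cball z r)"
    using sets_m by (simp add: porous_kernel_def r_def nn_integral_cmult_indicator)
  also have "\<dots> \<le> gs z * indicator (scale_annulus k) z * ennreal (1 / vol z r) * ennreal (C1 * vol z r / r powr \<theta>)"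
    using r_pos by (intro mult_left_mono m_cball_le) (auto simp: r_def)
  also have "\<dots> = gs z * indicator (scale_annulus k) z * ennreal (C1 / r powr \<theta>)"
    using vol_pos[OF r_pos, of z] C1_pos r_pos by (simp add: mult.assoc ennreal_mult[symmetric])
  finally show ?thesis by (simp add: r_def)
qed

lemma porous_kernel_fubini_le:
  "(\<integral>\<^sup>+x. (\<integral>\<^sup>+z. porous_kernel k x z \<partial>\<mu>) \<partial>m k)
     \<le> ennreal (C1 / (\<epsilon> ^ k) powr \<theta>) * (\<integral>\<^sup>+z\<in>scale_annulus k. gs z \<partial>\<mu>)"
proof -
  have "(\<integral>\<^sup>+x. (\<integral>\<^sup>+z. porous_kernel k x z \<partial>\<mu>) \<partial>m k) = (\<integral>\<^sup>+z. (\<integral>\<^sup>+x. porous_kernel k x z \<partial>m k) \<partial>\<mu>)"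
    using pair_sigma_finite.Fubini'[OF pair_sigma_finite.intro[OF sigma_finite_m sigma_finite_\<mu>] borel_measurable_porous_kernel]
    by simp
  also have "\<dots> \<le> (\<integral>\<^sup>+z. gs z * indicator (scale_annulus k) z * ennreal (C1 / (\<epsilon> ^ k) powr \<theta>) \<partial>\<mu>)"
    by (intro nn_integral_mono porous_kernel_integral_le)
  also have "\<dots> = ennreal (C1 / (\<epsilon> ^ k) powr \<theta>) * (\<integral>\<^sup>+z\<in>scale_annulus k. gs z \<partial>\<mu>)"
    using borel_measurable_gs scale_annulus_closed
    by (subst nn_integral_multc) (auto simp: measurable_cong_sets[OF sets_\<mu> refl] mult.commute)
  finally show ?thesis .
qed

lemma vol_le_porous_ball:
  assumes "0 < r" "r \<le> 1" "dist x y \<le> r" "\<sigma> * r \<le> s"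
  shows "vol x r \<le> D ^ N * vol y (s / 2)"
proof -
  have "vol x r \<le> vol y (2 * r)"
    using assms(1,3) by (intro vol_mono cball_subset_cball_dist) (auto simp: dist_commute)
  also have "\<dots> \<le> D ^ N * vol y (2 * r / 2 ^ N)"
    using assms(1,2) by (intro vol_doubling_power) auto
  also have "\<dots> \<le> D ^ N * vol y (s / 2)"
  proof (intro mult_left_mono vol_mono subset_cball)
    have "2 * r * 4 \<le> 2 * (\<sigma> * r) * 2 ^ N"
      using mult_left_mono[OF N, of "2 * r"] assms(1) by (simp add: ac_simps)
    also have "\<dots> \<le> 2 * s * 2 ^ N" using assms(4) by simp
    finally show "2 * r / 2 ^ N \<le> s / 2" by (simp add: field_simps)
  qed (use assms D_ge_1 mult_pos_pos[OF sigma_pos assms(1)] in auto)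
  finally show ?thesis .
qed

lemma nn_set_integral_gs_le_porous_kernel:
  assumes "B \<subseteq> cball x (\<epsilon> ^ k) \<inter> scale_annulus k"
  shows "(\<integral>\<^sup>+z\<in>B. gs z \<partial>\<mu>) \<le> ennreal (D * vol x (\<epsilon> ^ k)) * (\<integral>\<^sup>+z. porous_kernel k x z \<partial>\<mu>)"
proof -
  define r where "r = \<epsilon> ^ k"
  have r_pos: "0 < r" and r_le: "r \<le> 1"
    using eps_pos eps_le by (auto simp: r_def power_le_one)
  have "gs z * indicator B z \<le> ennreal (D * vol x r) * porous_kernel k x z" for z
  proof (cases "z \<in> B")
    case True
    then have dxz: "dist x z \<le> r" and zV: "z \<in> scale_annulus k" using assms by (auto simp: r_def)
    have "vol z r \<le> vol x (2 * r)"
      using r_pos dxz by (intro vol_mono cball_subset_cball_dist) (auto simp: dist_commute)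
    also have "\<dots> \<le> D * vol x r" using r_pos r_le by (intro vol_doubling)
    finally have "1 \<le> D * vol x r * (1 / vol z r)" using vol_pos[OF r_pos, of z] by simp
    then have "gs z * 1 \<le> gs z * (ennreal (D * vol x r) * ennreal (1 / vol z r))"
      using D_ge_1 vol_pos[OF r_pos, of x] vol_pos[OF r_pos, of z]
      by (intro mult_left_mono) (auto simp flip: ennreal_1 ennreal_mult intro: ennreal_leI)
    then show ?thesis
      using True dxz zV by (simp add: porous_kernel_def r_def dist_commute ac_simps)
  qed simp
  then have "(\<integral>\<^sup>+z\<in>B. gs z \<partial>\<mu>) \<le> (\<integral>\<^sup>+z. ennreal (D * vol x r) * porous_kernel k x z \<partial>\<mu>)"
    by (intro nn_integral_mono)
  also have "\<dots> = ennreal (D * vol x r) * (\<integral>\<^sup>+z. porous_kernel k x z \<partial>\<mu>)"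
    using measurable_Pair2[OF borel_measurable_porous_kernel[of k], of x]
    by (intro nn_integral_cmult) (simp add: sets_eq_imp_space_eq[OF sets_m])
  finally show ?thesis by (simp add: r_def)
qed

lemma osc_porous_le_porous_kernel:
  assumes "0 < k" "x \<in> porous_pts S (\<epsilon> ^ k) \<sigma>"
  shows "epowr (osc (m k) f (cball x (\<epsilon> ^ k))) p
    \<le> ennreal (D ^ Suc N * (ratio_const * \<epsilon> ^ k) powr p) * (\<integral>\<^sup>+z. porous_kernel k x z \<partial>\<mu>)"
proof -
  define r where "r = \<epsilon> ^ k"
  define osc_p where "osc_p = epowr (osc (m k) f (cball x r)) p"
  define E where "E = (ratio_const * r) powr p"
  have r_pos: "0 < r" and r_le: "r \<le> 1" and E_pos: "0 < E"
    using eps_pos eps_le ratio_const_pos by (auto simp: r_def E_def power_le_one)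
  obtain y s where xS: "x \<in> S" and s_pos: "0 < s" and s_ge: "\<sigma> * r \<le> s"
    and hole: "cball y s \<subseteq> cball x r - S"
    using assms(2) by (auto simp: porous_pts_def r_def)
  have half: "cball y (s / 2) \<subseteq> cball x r \<inter> scale_annulus k"
    using porous_half_ball_subset[OF hole xS s_pos] s_ge by (auto simp: scale_annulus_def r_def)
  have "osc_p * emeasure \<mu> (cball y (s / 2)) \<le> ennreal E * (\<integral>\<^sup>+z\<in>cball y (s / 2). gs z \<partial>\<mu>)"
  proof (rule lower_envelope_nn_set_integral_ge[OF envelope _ E_pos])
    fix z assume "z \<in> cball y (s / 2)"
    then have "osc (m k) f (cball x r) \<le> ennreal (ratio_const * r) * sharp \<epsilon> m f z"
      using osc_cball_le_sharp[OF assms(1) xS] half by (auto simp: r_def)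
    then have "osc_p \<le> epowr (ennreal (ratio_const * r) * sharp \<epsilon> m f z) p"
      unfolding osc_p_def by (rule epowr_mono[OF p_pos])
    then show "osc_p \<le> ennreal E * epowr (sharp \<epsilon> m f z) p"
      using ratio_const_pos r_pos p_pos by (simp add: E_def epowr_cmult)
  qed (simp add: sets_\<mu>)
  also have "\<dots> \<le> ennreal E * (ennreal (D * vol x r) * (\<integral>\<^sup>+z. porous_kernel k x z \<partial>\<mu>))"
    using nn_set_integral_gs_le_porous_kernel[OF half[unfolded r_def]] by (intro mult_left_mono) (auto simp: r_def)
  finally have osc_ball: "osc_p * emeasure \<mu> (cball y (s / 2))
      \<le> ennreal E * (ennreal (D * vol x r) * (\<integral>\<^sup>+z. porous_kernel k x z \<partial>\<mu>))" .
  have "y \<in> cball y s" using s_pos by simp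
  then have "y \<in> cball x r" using hole by blast
  then have "dist x y \<le> r" by simp
  then have "ennreal (vol x r) \<le> ennreal (D ^ N) * emeasure \<mu> (cball y (s / 2))"
    using vol_le_porous_ball[OF r_pos r_le _ s_ge] D_ge_1 vol_pos[of "s / 2" y] s_pos
    by (simp add: emeasure_cball_eq_vol ennreal_mult[symmetric] ennreal_leI)
  then have "ennreal (vol x r) * osc_p \<le> ennreal (D ^ N) * (osc_p * emeasure \<mu> (cball y (s / 2)))"
    by (simp add: mult.commute mult.left_commute mult_left_mono)
  also have "\<dots> \<le> ennreal (D ^ N) * (ennreal E * (ennreal (D * vol x r) * (\<integral>\<^sup>+z. porous_kernel k x z \<partial>\<mu>)))"
    by (intro mult_left_mono osc_ball) simp
  also have "\<dots> = ennreal (vol x r) * (ennreal (D ^ Suc N * E) * (\<integral>\<^sup>+z. porous_kernel k x z \<partial>\<mu>))"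
    using D_ge_1 E_pos vol_pos[OF r_pos, of x] by (simp add: ennreal_mult ac_simps)
  finally show ?thesis
    using vol_pos[OF r_pos, of x] by (simp add: ennreal_mult_le_mult_iff osc_p_def E_def r_def)
qed

lemma porous_scale_le:
  assumes "0 < k"
  shows "ennreal (\<epsilon> powr (real k * (\<theta> - p))) *
      (\<integral>\<^sup>+x\<in>porous_pts S (\<epsilon> ^ k) \<sigma>. epowr (osc (m k) f (cball x (\<epsilon> ^ k))) p \<partial>m k)
    \<le> ennreal (D ^ Suc N * ratio_const powr p * C1) * (\<integral>\<^sup>+z\<in>scale_annulus k. gs z \<partial>\<mu>)"
proof -
  define r where "r = \<epsilon> ^ k"
  define c where "c = D ^ Suc N * (ratio_const * r) powr p"
  have r_pos: "0 < r" using eps_pos by (simp add: r_def)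
  have "(\<integral>\<^sup>+x\<in>porous_pts S r \<sigma>. epowr (osc (m k) f (cball x r)) p \<partial>m k)
      \<le> (\<integral>\<^sup>+x. ennreal c * (\<integral>\<^sup>+z. porous_kernel k x z \<partial>\<mu>) \<partial>m k)"
    using osc_porous_le_porous_kernel[OF assms] by (intro nn_integral_mono) (auto simp: indicator_def c_def r_def)
  also have "\<dots> = ennreal c * (\<integral>\<^sup>+x. (\<integral>\<^sup>+z. porous_kernel k x z \<partial>\<mu>) \<partial>m k)"
    by (intro nn_integral_cmult sigma_finite_measure.borel_measurable_nn_integral[OF sigma_finite_\<mu> borel_measurable_porous_kernel])
  also have "\<dots> \<le> ennreal c * (ennreal (C1 / r powr \<theta>) * (\<integral>\<^sup>+z\<in>scale_annulus k. gs z \<partial>\<mu>))"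
    using porous_kernel_fubini_le by (intro mult_left_mono) (auto simp: r_def)
  finally have "ennreal (r powr (\<theta> - p)) * (\<integral>\<^sup>+x\<in>porous_pts S r \<sigma>. epowr (osc (m k) f (cball x r)) p \<partial>m k)
      \<le> ennreal (r powr (\<theta> - p)) * (ennreal c * (ennreal (C1 / r powr \<theta>) * (\<integral>\<^sup>+z\<in>scale_annulus k. gs z \<partial>\<mu>)))"
    by (rule mult_left_mono) simp
  also have "\<dots> = ennreal (r powr (\<theta> - p)) * ennreal c * ennreal (C1 / r powr \<theta>)
      * (\<integral>\<^sup>+z\<in>scale_annulus k. gs z \<partial>\<mu>)"
    by (simp add: mult.assoc)
  also have "ennreal (r powr (\<theta> - p)) * ennreal c * ennreal (C1 / r powr \<theta>) = ennreal (D ^ Suc N * ratio_const powr p * C1)"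
  proof -
    have "r powr (\<theta> - p) * c * (C1 / r powr \<theta>) = D ^ Suc N * ratio_const powr p * C1"
      using r_pos ratio_const_pos by (simp add: c_def powr_mult powr_diff field_simps)
    moreover have "0 \<le> c" using D_ge_1 by (simp add: c_def)
    ultimately show ?thesis using C1_pos by (simp flip: ennreal_mult)
  qed
  also have "r powr (\<theta> - p) = \<epsilon> powr (real k * (\<theta> - p))"
    using eps_pos by (simp add: r_def powr_powr powr_realpow[symmetric])
  finally show ?thesis by (simp add: r_def)
qed

lemma suminf_indicator_scale_annulus_le: "(\<Sum>k. indicator (scale_annulus k) z :: ennreal) \<le> of_nat (2 * N + 1)"
proof -
  have "\<epsilon> ^ N \<le> (1 / 2) ^ N" using eps_pos eps_le by (intro power_mono) auto
  also have "\<dots> < \<sigma> / 2" using N sigma_pos by (simp add: field_simps power_one_over)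
  finally have eps_N: "\<epsilon> ^ N < \<sigma> / 2" .
  show ?thesis
    using suminf_indicator_scales_le[OF eps_pos _ eps_N, of "infdist z S"] eps_le
    by (simp add: scale_annulus_def indicator_def)
qed

lemma porous_sum_le:
  "(\<Sum>k. if k = 0 then 0 else ennreal (\<epsilon> powr (real k * (\<theta> - p))) *
      (\<integral>\<^sup>+x\<in>porous_pts S (\<epsilon> ^ k) \<sigma>. epowr (osc (m k) f (cball x (\<epsilon> ^ k))) p \<partial>m k))
    \<le> ennreal (D ^ Suc N * ratio_const powr p * C1 * (2 * N + 1)) * (\<integral>\<^sup>+x. epowr (sharp \<epsilon> m f x) p \<partial>\<mu>)"
proof -
  let ?c = "D ^ Suc N * ratio_const powr p * C1"
  have gs_meas: "gs \<in> borel_measurable \<mu>" using envelope by (simp add: lower_envelope_def)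
  have "(\<Sum>k. if k = 0 then 0 else ennreal (\<epsilon> powr (real k * (\<theta> - p))) *
      (\<integral>\<^sup>+x\<in>porous_pts S (\<epsilon> ^ k) \<sigma>. epowr (osc (m k) f (cball x (\<epsilon> ^ k))) p \<partial>m k))
    \<le> (\<Sum>k. ennreal ?c * (\<integral>\<^sup>+z\<in>scale_annulus k. gs z \<partial>\<mu>))"
  proof (intro suminf_le summableI)
    show "(if k = 0 then 0 else ennreal (\<epsilon> powr (real k * (\<theta> - p))) *
      (\<integral>\<^sup>+x\<in>porous_pts S (\<epsilon> ^ k) \<sigma>. epowr (osc (m k) f (cball x (\<epsilon> ^ k))) p \<partial>m k))
      \<le> ennreal ?c * (\<integral>\<^sup>+z\<in>scale_annulus k. gs z \<partial>\<mu>)" for k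
      using porous_scale_le[of k] by (cases "k = 0") simp_all
  qed
  also have "\<dots> = ennreal ?c * (\<integral>\<^sup>+z. gs z * (\<Sum>k. indicator (scale_annulus k) z) \<partial>\<mu>)"
  proof -
    have "(\<Sum>k. \<integral>\<^sup>+z. gs z * indicator (scale_annulus k) z \<partial>\<mu>)
        = (\<integral>\<^sup>+z. (\<Sum>k. gs z * indicator (scale_annulus k) z) \<partial>\<mu>)"
      using gs_meas scale_annulus_closed sets_\<mu>
      by (intro nn_integral_suminf[symmetric] borel_measurable_times_ennreal borel_measurable_indicator) auto
    then show ?thesis by (simp add: ennreal_suminf_cmult)
  qed
  also have "\<dots> \<le> ennreal ?c * (\<integral>\<^sup>+z. gs z * of_nat (2 * N + 1) \<partial>\<mu>)"
    by (intro mult_left_mono nn_integral_mono suminf_indicator_scale_annulus_le) simp_all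
  also have "\<dots> = ennreal ?c * (of_nat (2 * N + 1) * (\<integral>\<^sup>+x. epowr (sharp \<epsilon> m f x) p \<partial>\<mu>))"
    using gs_meas envelope by (simp add: lower_envelope_def nn_integral_multc mult.commute)
  also have "\<dots> = ennreal (?c * (2 * N + 1)) * (\<integral>\<^sup>+x. epowr (sharp \<epsilon> m f x) p \<partial>\<mu>)"
    using D_ge_1 C1_pos ratio_const_pos
    by (simp add: ennreal_mult ennreal_of_nat_eq_real_of_nat mult.assoc del: of_nat_add of_nat_mult)
  finally show ?thesis .
qed

end

lemma porous_sum_le_sharp:
  assumes "0 < \<sigma>" "0 < p"
  obtains C where "0 < C" "\<And>f. (\<Sum>k. if k = 0 then 0 else ennreal (\<epsilon> powr (real k * (\<theta> - p))) *
      (\<integral>\<^sup>+x\<in>porous_pts S (\<epsilon> ^ k) \<sigma>. epowr (osc (m k) f (cball x (\<epsilon> ^ k))) p \<partial>m k))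
    \<le> ennreal C * (\<integral>\<^sup>+x. epowr (sharp \<epsilon> m f x) p \<partial>\<mu>)"
proof -
  obtain N :: nat where "4 / \<sigma> \<le> 2 ^ N"
    using real_arch_pow[of 2 "4 / \<sigma>"] by (auto intro: less_imp_le)
  then have N: "4 \<le> \<sigma> * 2 ^ N" using assms(1) by (simp add: field_simps)
  define C where "C = D ^ Suc N * ratio_const powr p * C1 * (2 * N + 1)"
  have "0 < C" using D_ge_1 C1_pos ratio_const_pos by (simp add: C_def)
  then show ?thesis
  proof (rule that)
    fix f
    show "(\<Sum>k. if k = 0 then 0 else ennreal (\<epsilon> powr (real k * (\<theta> - p))) *
      (\<integral>\<^sup>+x\<in>porous_pts S (\<epsilon> ^ k) \<sigma>. epowr (osc (m k) f (cball x (\<epsilon> ^ k))) p \<partial>m k))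
      \<le> ennreal C * (\<integral>\<^sup>+x. epowr (sharp \<epsilon> m f x) p \<partial>\<mu>)"
    proof (cases "(\<integral>\<^sup>+x. epowr (sharp \<epsilon> m f x) p \<partial>\<mu>) = \<infinity>")
      case True
      then show ?thesis using \<open>0 < C\<close> by (simp add: ennreal_mult_top)
    next
      case False
      then have "(\<integral>\<^sup>+x. epowr (sharp \<epsilon> m f x) p \<partial>\<mu>) < \<infinity>" by (simp add: less_top)
      then obtain gs where "lower_envelope \<mu> (\<lambda>x. epowr (sharp \<epsilon> m f x) p) gs"
        by (rule lower_envelope_exists)
      then show ?thesis unfolding C_def by (rule porous_sum_le[OF assms(1,2) N])
    qed
  qed
qed

lemma sharp_porous_Lp_bound:
  assumes "0 < \<sigma>" "0 < p"
  shows "\<exists>C>0. \<forall>f. epowr (\<integral>\<^sup>+x\<in>S. epowr (sharp \<epsilon> m f x) p \<partial>\<mu>) (1/p)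
     + epowr (\<Sum>k. if k = 0 then 0 else ennreal (\<epsilon> powr (real k * (\<theta> - p))) *
          (\<integral>\<^sup>+x\<in>porous_pts S (\<epsilon> ^ k) \<sigma>. epowr (osc (m k) f (cball x (\<epsilon> ^ k))) p \<partial>(m k))) (1/p)
     \<le> ennreal C * epowr (\<integral>\<^sup>+x. epowr (sharp \<epsilon> m f x) p \<partial>\<mu>) (1/p)"
proof -
  obtain C where "0 < C" and porous: "\<And>f. (\<Sum>k. if k = 0 then 0 else ennreal (\<epsilon> powr (real k * (\<theta> - p))) *
      (\<integral>\<^sup>+x\<in>porous_pts S (\<epsilon> ^ k) \<sigma>. epowr (osc (m k) f (cball x (\<epsilon> ^ k))) p \<partial>m k))
    \<le> ennreal C * (\<integral>\<^sup>+x. epowr (sharp \<epsilon> m f x) p \<partial>\<mu>)"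
    using porous_sum_le_sharp[OF assms] by blast
  have restrict: "(\<integral>\<^sup>+x\<in>S. g x \<partial>\<mu>) \<le> (\<integral>\<^sup>+x. g x \<partial>\<mu>)" for g :: "'a \<Rightarrow> ennreal"
    by (intro nn_integral_mono) (simp add: indicator_def)
  show ?thesis
    using epowr_add_le_cmult[OF restrict porous \<open>0 < C\<close> assms(2)] \<open>0 < C\<close>
    by (intro exI[of _ "1 + C powr (1/p)"]) (auto intro: add_pos_nonneg)
qed

end

lemma sharp_setting_if_class_A_M_class:
  fixes \<mu> :: "'a::polish_space measure"
  assumes "class_A p \<mu>" "M_class \<mu> \<theta> S \<epsilon> m" "0 \<le> \<theta>" "0 < \<epsilon>" "\<epsilon> \<le> 1/3"
  obtains D C1 C2 L where "sharp_setting \<mu> m S \<epsilon> \<theta> D C1 C2 L"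
proof -
  obtain D where D: "\<forall>r x. 0 < r \<and> r \<le> 1 \<longrightarrow>
      emeasure \<mu> (cball x (2 * r)) \<le> ennreal D * emeasure \<mu> (cball x r)"
    using assms(1) unfolding class_A_def unif_loc_doubling_def by (meson zero_less_one)
  obtain C1 where C1: "\<forall>k x r. 0 < r \<and> r \<le> \<epsilon> ^ k \<longrightarrow>
      emeasure (m k) (cball x r) \<le> ennreal C1 * emeasure \<mu> (cball x r) / ennreal (r powr \<theta>)"
    using assms(2) unfolding M_class_def by blast
  obtain L where L: "0 < L" "\<And>k A. A \<in> sets borel \<Longrightarrow> emeasure (m (Suc k)) A \<le> ennreal L * emeasure (m k) A"
    using M_class_emeasure_Suc_le[OF assms(2,4)] by blast
  have C1': "emeasure (m k) (cball x r) \<le> ennreal (max C1 1) * emeasure \<mu> (cball x r) / ennreal (r powr \<theta>)"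
    if "0 < r" "r \<le> \<epsilon> ^ k" for k x r
  proof -
    have "emeasure (m k) (cball x r) \<le> ennreal C1 * emeasure \<mu> (cball x r) / ennreal (r powr \<theta>)"
      using C1 that by blast
    also have "\<dots> \<le> ennreal (max C1 1) * emeasure \<mu> (cball x r) / ennreal (r powr \<theta>)"
      by (intro divide_right_mono_ennreal mult_right_mono ennreal_leI) auto
    finally show ?thesis .
  qed
  obtain C2 where C2: "0 < C2" "\<forall>k. \<forall>x\<in>S. \<forall>r. \<epsilon> ^ k \<le> r \<and> r \<le> 1 \<longrightarrow>
      ennreal C2 * emeasure \<mu> (cball x r) / ennreal (r powr \<theta>) \<le> emeasure (m k) (cball x r)"
    using assms(2) unfolding M_class_def by blast
  have mm: "mm_space \<mu>" using assms(1) by (simp add: class_A_def)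
  have m: "\<forall>k. is_measure_on (m k)" "\<forall>k. supp_m (m k) = S"
    using assms(2) by (simp_all add: M_class_def)
  show ?thesis
  proof (rule that[of D "max C1 1" C2 L], unfold_locales)
    show "sets \<mu> = sets borel" using mm by (simp add: mm_space_def)
    show "0 < emeasure \<mu> (cball x r)" "emeasure \<mu> (cball x r) < \<infinity>" if "0 < r" for x r
      using mm that by (simp_all add: mm_space_def)
    show "emeasure \<mu> (cball x (2 * r)) \<le> ennreal D * emeasure \<mu> (cball x r)"
      if "0 < r" "r \<le> 1" for x r
      using D that by blast
    show "sets (m k) = sets borel" "supp_m (m k) = S" for k
      using m by (simp_all add: is_measure_on_def)
    show "ennreal C2 * emeasure \<mu> (cball x r) / ennreal (r powr \<theta>) \<le> emeasure (m k) (cball x r)"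
      if "x \<in> S" "\<epsilon> ^ k \<le> r" "r \<le> 1" for k x r
      using C2 that by blast
  qed (use assms C1' L C2 in auto)
qed

theorem mainTheorem15:
  fixes \<mu> :: "'a::polish_space measure" and p \<theta> \<epsilon> :: real and S :: "'a set"
    and m :: "nat \<Rightarrow> 'a measure"
  assumes "1 < p" and "class_A p \<mu>" and "0 \<le> \<theta>" and "\<theta> < p"
    and "closed S" and "LCR \<mu> \<theta> S"
    and "0 < \<epsilon>" and "\<epsilon> \<le> 1/10" and "M_class \<mu> \<theta> S \<epsilon> m"
  shows "\<forall>\<sigma>. 0 < \<sigma> \<and> \<sigma> < 1 \<longrightarrow> (\<exists>C::real. C > 0 \<and> (\<forall>f. L1loc m f \<longrightarrow>
     epowr (\<integral>\<^sup>+x\<in>S. epowr (sharp \<epsilon> m f x) p \<partial>\<mu>) (1/p)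
     + epowr (\<Sum>k. if k = 0 then 0 else
          ennreal (\<epsilon> powr (real k * (\<theta> - p))) *
          (\<integral>\<^sup>+x\<in>porous_pts S (\<epsilon> ^ k) \<sigma>. epowr (osc (m k) f (cball x (\<epsilon> ^ k))) p \<partial>(m k))) (1/p)
     \<le> ennreal C * epowr (\<integral>\<^sup>+x. epowr (sharp \<epsilon> m f x) p \<partial>\<mu>) (1/p)))"
proof -
  obtain D C1 C2 L where "sharp_setting \<mu> m S \<epsilon> \<theta> D C1 C2 L"
    using sharp_setting_if_class_A_M_class[OF assms(2,9,3,7)] assms(8) by fastforce
  then interpret sharp_setting \<mu> m S \<epsilon> \<theta> D C1 C2 L .
  have "0 < p" using assms(1) by simp
  show ?thesis
  proof (intro allI impI, goal_cases)
    case (1 \<sigma>)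
    then show ?case using sharp_porous_Lp_bound[of \<sigma>] \<open>0 < p\<close> by blast
  qed
qed

end
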